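(* Let $\mathbb K$ be a field of characteristic $0$ and $N\ge2$. The image of the weight system $W^{\mathrm{St}}_{\mathfrak{sl}_N}:\mathcal A(\downarrow\downarrow)_{\mathbb K}\to\mathrm{End}(\mathbb K^N)^{\otimes2}$ associated with $(\mathfrak{sl}_N(\mathbb K),B_0,\mathrm{St})$ is a commutative subalgebra.
   Context: Jacobi diagrams on an oriented compact $1$-manifold $X$ span $\mathcal A(X)$ modulo AS, IHX, STU; $\mathcal A(X)_{\mathbb K}=\mathcal A(X)\otimes\mathbb K$; $\downarrow\downarrow$ is two downward oriented strands, and $\mathcal A(\downarrow\downarrow)$ is an algebra under stacking. For a metrized Lie algebra $(\mathfrak g,\langle\cdot,\cdot\rangle)$ over $\mathbb K$, the universal weight system $W_{\mathfrak g}:\mathcal A(\downarrow^{\otimes n})_{\mathbb K}\to U(\mathfrak g)^{\otimes n}$ is the algebra homomorphism obtained by putting on each edge the Casimir tensor $\Omega=\sum_av_a\otimes v^a$ (basis and dual basis w.r.t. the form), at each trivalent vertex $-\mathbf t$ where $\mathbf t\in\mathfrak g^{\otimes3}$ corresponds to $(x,y,z)\mapsto\langle[x,y],z\rangle$ (factors in cyclic order), contracting along edges and multiplying in $U(\mathfrak g)$ along each strand in its orientation order; for a representation $\rho:\mathfrak g\to\mathrm{End}(V)$, $W^\rho_{\mathfrak g}=U(\rho)^{\otimes n}\circ W_{\mathfrak g}$. $B_0(x,y)=\mathrm{tr}(xy)$ is the trace form and $\mathrm{St}$ the standard representation on $\mathbb K^N$. *)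

theory Defs
  imports Main "HOL-Library.FuncSet"
begin

section \<open>Matrices in End(K^N), represented as index functions (indices < N)\<close>

type_synonym 'k mat = "nat \<Rightarrow> nat \<Rightarrow> 'k"
(* element of End(K^N) \<otimes> End(K^N): T i j k l = coefficient of E_ij \<otimes> E_kl *)
type_synonym 'k tens2 = "nat \<Rightarrow> nat \<Rightarrow> nat \<Rightarrow> nat \<Rightarrow> 'k"

definition mE :: "nat \<Rightarrow> nat \<Rightarrow> 'k::field mat" where
  "mE i j = (\<lambda>a b. if a = i \<and> b = j then 1 else 0)"

definition mid :: "nat \<Rightarrow> 'k::field mat" where
  "mid N = (\<lambda>a b. if a = b \<and> a < N then 1 else 0)"

definition mmul :: "nat \<Rightarrow> 'k::field mat \<Rightarrow> 'k mat \<Rightarrow> 'k mat" where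
  "mmul N A B = (\<lambda>i j. \<Sum>m<N. A i m * B m j)"

definition mbracket :: "nat \<Rightarrow> 'k::field mat \<Rightarrow> 'k mat \<Rightarrow> 'k mat" where
  "mbracket N A B = (\<lambda>i j. mmul N A B i j - mmul N B A i j)"

definition trform :: "nat \<Rightarrow> 'k::field mat \<Rightarrow> 'k mat \<Rightarrow> 'k" where
  "trform N A B = (\<Sum>i<N. \<Sum>j<N. A i j * B j i)"

fun mprod :: "nat \<Rightarrow> 'k::field mat list \<Rightarrow> 'k mat" where
  "mprod N [] = mid N"
| "mprod N (A # As) = mmul N A (mprod N As)"

text \<open>Omega = sum_{i,j<N} E_ij \<otimes> E_ji - (1/N) I \<otimes> I, which equals
  sum_a v_a \<otimes> v^a for any basis (v_a) of sl_N with dual basis (v^a) w.r.t. tr(xy).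
  Term index: Some (i,j) for E_ij \<otimes> E_ji with coefficient 1; None for I \<otimes> I with
  coefficient -1/N.\<close>

definition omega_idx :: "nat \<Rightarrow> (nat \<times> nat) option set" where
  "omega_idx N = {None} \<union> Some ` ({..<N} \<times> {..<N})"

fun omega_fst :: "nat \<Rightarrow> (nat \<times> nat) option \<Rightarrow> 'k::field mat" where
  "omega_fst N None = mid N"
| "omega_fst N (Some (i, j)) = mE i j"

fun omega_snd :: "nat \<Rightarrow> (nat \<times> nat) option \<Rightarrow> 'k::field mat" where
  "omega_snd N None = mid N"
| "omega_snd N (Some (i, j)) = mE j i"

fun omega_coef :: "nat \<Rightarrow> (nat \<times> nat) option \<Rightarrow> 'k::field" where
  "omega_coef N None = - 1 / of_nat N"
| "omega_coef N (Some _) = 1"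

section \<open>Jacobi diagrams on two strands (uni-trivalent, vertex-oriented)\<close>

text \<open>Ends (half-edges): TV v i = i-th slot (i<3, in cyclic order) of trivalent vertex v;
  SP s p = p-th univalent vertex (in orientation order) on strand s (s<2).\<close>
datatype jend = TV nat nat | SP nat nat

record jdiag =
  nverts :: nat
  npts :: "nat \<Rightarrow> nat"
  partner :: "jend \<Rightarrow> jend"

definition ends :: "jdiag \<Rightarrow> jend set" where
  "ends D = {TV v i | v i. v < nverts D \<and> i < 3} \<union> {SP s p | s p. s < 2 \<and> p < npts D s}"

text \<open>Edges: a fixed-point-free involution on the ends.\<close>
definition wf_jdiag :: "jdiag \<Rightarrow> bool" where
  "wf_jdiag D \<longleftrightarrow> (\<forall>e\<in>ends D. partner D e \<in> ends D \<and> partner D (partner D e) = e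
                                 \<and> partner D e \<noteq> e)"

fun end_lt :: "jend \<Rightarrow> jend \<Rightarrow> bool" where
  "end_lt (TV v i) (TV w j) = (v < w \<or> (v = w \<and> i < j))"
| "end_lt (TV _ _) (SP _ _) = True"
| "end_lt (SP _ _) (TV _ _) = False"
| "end_lt (SP s p) (SP t q) = (s < t \<or> (s = t \<and> p < q))"

text \<open>States: a choice of a term of Omega for every edge (constant on edges).\<close>
definition states :: "nat \<Rightarrow> jdiag \<Rightarrow> (jend \<Rightarrow> (nat \<times> nat) option) set" where
  "states N D = {\<kappa> \<in> ends D \<rightarrow>\<^sub>E omega_idx N. \<forall>e\<in>ends D. \<kappa> (partner D e) = \<kappa> e}"

definition endval :: "nat \<Rightarrow> jdiag \<Rightarrow> (jend \<Rightarrow> (nat \<times> nat) option) \<Rightarrow> jend \<Rightarrow> 'k::field mat" where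
  "endval N D \<kappa> e = (if end_lt e (partner D e) then omega_fst N (\<kappa> e) else omega_snd N (\<kappa> e))"

definition state_weight :: "nat \<Rightarrow> jdiag \<Rightarrow> (jend \<Rightarrow> (nat \<times> nat) option) \<Rightarrow> 'k::field" where
  "state_weight N D \<kappa> =
     (\<Prod>e \<in> {e \<in> ends D. end_lt e (partner D e)}. omega_coef N (\<kappa> e)) *
     (\<Prod>v<nverts D. - trform N (mbracket N (endval N D \<kappa> (TV v 0)) (endval N D \<kappa> (TV v 1)))
                                (endval N D \<kappa> (TV v 2)))"

definition strand_val :: "nat \<Rightarrow> jdiag \<Rightarrow> (jend \<Rightarrow> (nat \<times> nat) option) \<Rightarrow> nat \<Rightarrow> 'k::field mat" where
  "strand_val N D \<kappa> s = mprod N (map (\<lambda>p. endval N D \<kappa> (SP s p)) [0..<npts D s])"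

definition Wst :: "nat \<Rightarrow> jdiag \<Rightarrow> 'k::field tens2" where
  "Wst N D = (\<lambda>i j k l. \<Sum>\<kappa>\<in>states N D.
      state_weight N D \<kappa> * strand_val N D \<kappa> 0 i j * strand_val N D \<kappa> 1 k l)"

definition tmul :: "nat \<Rightarrow> 'k::field tens2 \<Rightarrow> 'k tens2 \<Rightarrow> 'k tens2" where
  "tmul N S T = (\<lambda>i j k l. \<Sum>m<N. \<Sum>n<N. S i m k n * T m j n l)"

definition tid :: "nat \<Rightarrow> 'k::field tens2" where
  "tid N = (\<lambda>i j k l. mid N i j * mid N k l)"

text \<open>Image of the linear map A(\<down>\<down>)_K \<rightarrow> End(K^N)^{\<otimes>2}: the K-span of the values on diagrams.\<close>
definition Wst_image :: "nat \<Rightarrow> 'k::field tens2 set" where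
  "Wst_image N = {(\<lambda>i j k l. \<Sum>D\<in>F. c D * Wst N D i j k l) | F c.
                    finite F \<and> (\<forall>D\<in>F. wf_jdiag D)}"

definition comm_subalgebra :: "nat \<Rightarrow> 'k::field tens2 set \<Rightarrow> bool" where
  "comm_subalgebra N A \<longleftrightarrow>
     tid N \<in> A \<and>
     (\<forall>S\<in>A. \<forall>T\<in>A. (\<lambda>i j k l. S i j k l + T i j k l) \<in> A) \<and>
     (\<forall>c. \<forall>S\<in>A. (\<lambda>i j k l. c * S i j k l) \<in> A) \<and>
     (\<forall>S\<in>A. \<forall>T\<in>A. tmul N S T \<in> A) \<and>
     (\<forall>S\<in>A. \<forall>T\<in>A. tmul N S T = tmul N T S)"

end

theory Submission
  imports Defs "HOL-Combinatorics.Permutations"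
begin

(* Two symmetries of the weight system do all the work.

   Charge conservation: under the diagonal torus E_ab has weight eps_a - eps_b, the vertex
   tensor tr([x,y] z) vanishes unless the weights of x, y, z add up to zero, and the two ends
   of an edge carry opposite weights.  Summing the weights over all ends of a diagram D
   therefore shows that W(D) has weight zero, i.e. it lies in the span of the tensors
   E_ii (x) E_kk and E_ik (x) E_ki.

   Permutation invariance: relabelling the states of D by a permutation of {0..N-1} conjugates
   every matrix by a permutation matrix, which preserves the Casimir and the trace form, so
   W(D) is S_N-invariant.

   A direct computation shows that S_N-invariant tensors of weight zero commute.  Since
   stacking diagrams is sent to the product and the empty diagram to the unit, the span of
   the values W(D) is a subalgebra, hence a commutative one. *)

type_synonym state = "jend \<Rightarrow> (nat \<times> nat) option"

lemma mmul_assoc: "mmul N (mmul N A B) C = mmul N A (mmul N B C :: 'k::field mat)"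
proof (intro ext)
  fix a b
  have "mmul N (mmul N A B) C a b = (\<Sum>m<N. \<Sum>p<N. A a p * B p m * C m b)"
    by (simp add: mmul_def sum_distrib_right)
  also have "\<dots> = (\<Sum>p<N. \<Sum>m<N. A a p * B p m * C m b)"
    by (rule sum.swap)
  also have "\<dots> = mmul N A (mmul N B C) a b"
    by (simp add: mmul_def sum_distrib_left mult.assoc)
  finally show "mmul N (mmul N A B) C a b = mmul N A (mmul N B C) a b" .
qed

lemma mmul_mid_left:
  assumes "\<And>a b. M a b \<noteq> 0 \<Longrightarrow> a < N"
  shows "mmul N (mid N) M = (M :: 'k::field mat)"
proof (intro ext)
  fix a b
  have "mmul N (mid N) M a b = (\<Sum>m<N. if m = a then M a b else 0)"
    unfolding mmul_def by (intro sum.cong) (auto simp: mid_def)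
  then show "mmul N (mid N) M a b = M a b"
    using assms[of a b] by auto
qed

lemma mprod_append:
  assumes "\<And>a b. mprod N ys a b \<noteq> 0 \<Longrightarrow> a < N"
  shows "mprod N (xs @ ys) = mmul N (mprod N xs) (mprod N ys :: 'k::field mat)"
  by (induction xs) (simp_all add: mmul_mid_left[OF assms] mmul_assoc)

definition mat_tensor :: "'k::field mat \<Rightarrow> 'k mat \<Rightarrow> 'k tens2" where
  "mat_tensor A B = (\<lambda>i j k l. A i j * B k l)"

lemma tmul_mat_tensor:
  "tmul N (mat_tensor A B) (mat_tensor C D) = mat_tensor (mmul N A C) (mmul N B D)"
  by (simp add: fun_eq_iff tmul_def mat_tensor_def mmul_def sum_product mult_ac)

lemma tmul_sum_scaled:
  "tmul N (\<lambda>i j k l. \<Sum>x\<in>X. a x * S x i j k l) (\<lambda>i j k l. \<Sum>y\<in>Y. b y * T y i j k l) =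
    (\<lambda>i j k l. \<Sum>x\<in>X. \<Sum>y\<in>Y. a x * b y * tmul N (S x) (T y) i j k l :: 'k::field)"
  \<comment> \<open>these instances of \<open>sum.swap\<close> only move sums over X and Y outwards, so simp terminates\<close>
  by (simp add: fun_eq_iff tmul_def sum_product sum_distrib_left mult_ac
      sum.swap[where A = "{..<N}" and B = X] sum.swap[where A = "{..<N}" and B = Y]
      sum.swap[where A = Y and B = X])

section \<open>Charge conservation\<close>

(* charge y a b is the y-th coordinate of the torus weight eps_a - eps_b of E_ab; has_charge
   records one coordinate of the weight of a homogeneous matrix supported in {..<N}^2. *)
definition charge :: "nat \<Rightarrow> nat \<Rightarrow> nat \<Rightarrow> int" where
  "charge y a b = of_bool (a = y) - of_bool (b = y)"

definition has_charge :: "nat \<Rightarrow> nat \<Rightarrow> int \<Rightarrow> 'k::field mat \<Rightarrow> bool" where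
  "has_charge N y q M \<longleftrightarrow> (\<forall>a b. M a b \<noteq> 0 \<longrightarrow> a < N \<and> b < N \<and> charge y a b = q)"

lemma charge_add: "charge y a m + charge y m b = charge y a b"
  by (simp add: charge_def)

lemma charge_swap: "charge y b a = - charge y a b"
  by (simp add: charge_def)

lemma has_charge_mid: "has_charge N y 0 (mid N)"
  by (auto simp: has_charge_def mid_def charge_def)

lemma has_charge_mE: "i < N \<Longrightarrow> j < N \<Longrightarrow> has_charge N y (charge y i j) (mE i j)"
  by (auto simp: has_charge_def mE_def split: if_splits)

lemma has_charge_mmul:
  assumes "has_charge N y p A" "has_charge N y q B"
  shows "has_charge N y (p + q) (mmul N A B)"
  unfolding has_charge_def
proof (intro allI impI)
  fix a b assume "mmul N A B a b \<noteq> 0"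
  then obtain m where "A a m * B m b \<noteq> 0"
    unfolding mmul_def using sum.not_neutral_contains_not_neutral by blast
  then have "a < N \<and> charge y a m = p" "b < N \<and> charge y m b = q"
    using assms unfolding has_charge_def by auto
  then show "a < N \<and> b < N \<and> charge y a b = p + q"
    using charge_add[of y a m b] by simp
qed

lemma has_charge_mbracket:
  assumes "has_charge N y p A" "has_charge N y q B"
  shows "has_charge N y (p + q) (mbracket N A B)"
  unfolding has_charge_def mbracket_def
proof (intro allI impI)
  fix a b assume "mmul N A B a b - mmul N B A a b \<noteq> 0"
  then have "mmul N A B a b \<noteq> 0 \<or> mmul N B A a b \<noteq> 0" by auto
  then show "a < N \<and> b < N \<and> charge y a b = p + q"
    using has_charge_mmul[OF assms] has_charge_mmul[OF assms(2,1)]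
    unfolding has_charge_def by (auto simp: add.commute)
qed

lemma has_charge_mprod:
  "(\<And>x. x \<in> set xs \<Longrightarrow> has_charge N y (q x) (f x)) \<Longrightarrow>
    has_charge N y (\<Sum>x\<leftarrow>xs. q x) (mprod N (map f xs))"
  by (induction xs) (simp_all add: has_charge_mid has_charge_mmul)

lemma trform_eq_0_if_charge_nonzero:
  assumes "has_charge N y p A" "has_charge N y q B" "p + q \<noteq> 0"
  shows "trform N A B = 0"
proof -
  have vanish: "A i j * B j i = 0" for i j
  proof (rule ccontr)
    assume "A i j * B j i \<noteq> 0"
    then have "charge y i j = p" "charge y j i = q"
      using assms(1,2) by (auto simp: has_charge_def)
    then show False using assms(3) charge_swap[of y i j] by simp
  qed
  show ?thesis unfolding trform_def by (simp add: vanish)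
qed

lemma states_partner: "\<kappa> \<in> states N D \<Longrightarrow> e \<in> ends D \<Longrightarrow> \<kappa> (partner D e) = \<kappa> e"
  by (simp add: states_def)

lemma end_lt_asym: "e \<noteq> e' \<Longrightarrow> end_lt e' e \<longleftrightarrow> \<not> end_lt e e'"
  by (cases e; cases e') auto

definition end_charge :: "nat \<Rightarrow> jdiag \<Rightarrow> state \<Rightarrow> jend \<Rightarrow> int" where
  "end_charge y D \<kappa> e = (case \<kappa> e of None \<Rightarrow> 0 | Some (i, j) \<Rightarrow>
     if end_lt e (partner D e) then charge y i j else charge y j i)"

lemma has_charge_endval:
  assumes "\<kappa> \<in> states N D" "e \<in> ends D"
  shows "has_charge N y (end_charge y D \<kappa> e) (endval N D \<kappa> e)"
proof -
  have "\<kappa> e \<in> omega_idx N" using assms by (auto simp: states_def)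
  then consider "\<kappa> e = None" | i j where "\<kappa> e = Some (i, j)" "i < N" "j < N"
    unfolding omega_idx_def by auto
  then show ?thesis
  proof cases
    case 1
    then show ?thesis by (simp add: endval_def end_charge_def has_charge_mid)
  next
    case 2
    then show ?thesis by (simp add: endval_def end_charge_def has_charge_mE)
  qed
qed

lemma end_charge_partner:
  assumes "wf_jdiag D" "\<kappa> \<in> states N D" "e \<in> ends D"
  shows "end_charge y D \<kappa> (partner D e) = - end_charge y D \<kappa> e"
proof -
  have "partner D (partner D e) = e" "partner D e \<noteq> e"
    using assms(1,3) by (auto simp: wf_jdiag_def)
  then show ?thesis
    using states_partner[OF assms(2,3)] end_lt_asym[of e "partner D e"]
    by (cases "\<kappa> e") (auto simp: end_charge_def charge_def)
qed

lemma mem_ends_iff: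
  "e \<in> ends D \<longleftrightarrow> (case e of TV v t \<Rightarrow> v < nverts D \<and> t < 3 | SP s p \<Rightarrow> s < 2 \<and> p < npts D s)"
  by (cases e) (auto simp: ends_def)

lemma ends_eq:
  "ends D = (\<lambda>(v, t). TV v t) ` ({..<nverts D} \<times> {..<3}) \<union>
     SP 0 ` {..<npts D 0} \<union> SP 1 ` {..<npts D 1}"
  unfolding ends_def by (auto simp: less_Suc_eq numeral_2_eq_2)

lemma finite_ends: "finite (ends D)"
  by (simp add: ends_eq)

lemma sum_ends:
  "sum g (ends D) =
     (\<Sum>v<nverts D. \<Sum>t<3. g (TV v t)) + (\<Sum>p<npts D 0. g (SP 0 p)) + (\<Sum>p<npts D 1. g (SP 1 p))"
proof -
  have "inj_on (\<lambda>(v, t). TV v t) ({..<nverts D} \<times> {..<3})" by (auto simp: inj_on_def)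
  then have "sum g ((\<lambda>(v, t). TV v t) ` ({..<nverts D} \<times> {..<3})) = (\<Sum>v<nverts D. \<Sum>t<3. g (TV v t))"
    by (simp add: sum.reindex sum.cartesian_product case_prod_beta')
  moreover have "sum g (SP s ` {..<n}) = (\<Sum>p<n. g (SP s p))" for s n
    by (simp add: sum.reindex inj_on_def)
  ultimately show ?thesis
    unfolding ends_eq by (subst sum.union_disjoint, auto)+
qed

lemma sum_eq_0_if_negating_involution:
  fixes g :: "'a \<Rightarrow> 'b::linordered_ab_group_add"
  assumes "\<And>x. x \<in> A \<Longrightarrow> f x \<in> A" "\<And>x. x \<in> A \<Longrightarrow> f (f x) = x"
    and "\<And>x. x \<in> A \<Longrightarrow> g (f x) = - g x"
  shows "sum g A = 0"
proof -
  have "bij_betw f A A"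
    by (rule bij_betw_byWitness[where f' = f]) (use assms in auto)
  then have "sum g A = (\<Sum>x\<in>A. g (f x))" by (simp add: sum.reindex_bij_betw)
  also have "\<dots> = - sum g A" by (simp add: assms(3) sum_negf)
  finally show ?thesis by simp
qed

lemma end_charges_sum_zero:
  assumes "wf_jdiag D" "\<kappa> \<in> states N D"
  shows "(\<Sum>e\<in>ends D. end_charge y D \<kappa> e) = 0"
  using assms end_charge_partner by (intro sum_eq_0_if_negating_involution[where f = "partner D"])
    (auto simp: wf_jdiag_def)

lemma vertex_charge_zero:
  assumes "\<kappa> \<in> states N D" "state_weight N D \<kappa> \<noteq> 0" "v < nverts D"
  shows "(\<Sum>t<3. end_charge y D \<kappa> (TV v t)) = 0"
proof (rule ccontr)
  have ends: "TV v t \<in> ends D" if "t < 3" for t using assms(3) that by (simp add: ends_def)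
  let ?x = "\<lambda>t. endval N D \<kappa> (TV v t)" and ?q = "\<lambda>t. end_charge y D \<kappa> (TV v t)"
  have "has_charge N y (?q 0) (?x 0)" "has_charge N y (?q 1) (?x 1)" "has_charge N y (?q 2) (?x 2)"
    by (simp_all add: has_charge_endval[OF assms(1) ends])
  moreover assume "(\<Sum>t<3. ?q t) \<noteq> 0"
  then have "?q 0 + ?q 1 + ?q 2 \<noteq> 0" by (simp add: eval_nat_numeral)
  ultimately have "trform N (mbracket N (?x 0) (?x 1)) (?x 2) = 0"
    using trform_eq_0_if_charge_nonzero[OF has_charge_mbracket] by blast
  then have "state_weight N D \<kappa> = 0"
    using assms(3) by (auto simp: state_weight_def)
  with assms(2) show False ..
qed

lemma has_charge_strand_val:
  assumes "\<kappa> \<in> states N D" "s < 2"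
  shows "has_charge N y (\<Sum>p<npts D s. end_charge y D \<kappa> (SP s p))
    (strand_val N D \<kappa> s :: 'k::field mat)"
proof -
  have "has_charge N y (\<Sum>p\<leftarrow>[0..<npts D s]. end_charge y D \<kappa> (SP s p)) (strand_val N D \<kappa> s)"
    unfolding strand_val_def using assms
    by (intro has_charge_mprod has_charge_endval) (auto simp: ends_def)
  then show ?thesis
    by (simp only: interv_sum_list_conv_sum_set_nat set_upt atLeast0LessThan)
qed

lemma charge_balanced:
  assumes "\<And>y. charge y i j + charge y k l = 0"
  shows "i = j \<and> k = l \<or> i = l \<and> k = j"
proof (cases "i = j")
  case True
  then show ?thesis using assms[of k] by (simp add: charge_def)
next
  case False
  then show ?thesis using assms[of i] assms[of j]
    by (cases "k = i"; cases "l = i"; cases "k = j"; simp add: charge_def)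
qed

lemma Wst_support:
  assumes "wf_jdiag D" "Wst N D i j k l \<noteq> (0::'k::field)"
  shows "i < N \<and> j < N \<and> k < N \<and> l < N \<and> (i = j \<and> k = l \<or> i = l \<and> k = j)"
proof -
  obtain \<kappa> where \<kappa>: "\<kappa> \<in> states N D"
    and nz: "state_weight N D \<kappa> * strand_val N D \<kappa> 0 i j * strand_val N D \<kappa> 1 k l \<noteq> (0::'k)"
    using assms(2) unfolding Wst_def by (rule sum.not_neutral_contains_not_neutral)
  have strands: "i < N \<and> j < N \<and> charge y i j = (\<Sum>p<npts D 0. end_charge y D \<kappa> (SP 0 p))"
    "k < N \<and> l < N \<and> charge y k l = (\<Sum>p<npts D 1. end_charge y D \<kappa> (SP 1 p))" for y
    using has_charge_strand_val[OF \<kappa>, of 0 y] has_charge_strand_val[OF \<kappa>, of 1 y] nz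
    unfolding has_charge_def by auto
  have "charge y i j + charge y k l = 0" for y
  proof -
    have "state_weight N D \<kappa> \<noteq> (0::'k)" using nz by auto
    then have "(\<Sum>v<nverts D. \<Sum>t<3. end_charge y D \<kappa> (TV v t)) = 0"
      by (simp add: vertex_charge_zero[OF \<kappa>])
    then show ?thesis
      using end_charges_sum_zero[OF assms(1) \<kappa>, of y] strands[of y] by (simp add: sum_ends)
  qed
  with strands show ?thesis using charge_balanced by blast
qed

section \<open>Invariance under permutations of the basis\<close>

lemma permutes_lessThan_iff: "\<sigma> permutes {..<N} \<Longrightarrow> \<sigma> a < N \<longleftrightarrow> a < N"
  using permutes_in_image[of \<sigma> "{..<N}" a] by simp

definition permute_mat :: "(nat \<Rightarrow> nat) \<Rightarrow> 'k mat \<Rightarrow> 'k mat" where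
  "permute_mat \<sigma> M = (\<lambda>a b. M (\<sigma> a) (\<sigma> b))"

context
  fixes \<sigma> :: "nat \<Rightarrow> nat" and N :: nat
  assumes \<sigma>: "\<sigma> permutes {..<N}"
begin

lemma permute_mat_mid: "permute_mat \<sigma> (mid N) = (mid N :: 'k::field mat)"
  by (simp add: permute_mat_def mid_def fun_eq_iff permutes_lessThan_iff[OF \<sigma>]
      inj_eq[OF permutes_inj[OF \<sigma>]])

lemma permute_mat_mE: "permute_mat \<sigma> (mE i j) = (mE (inv \<sigma> i) (inv \<sigma> j) :: 'k::field mat)"
proof -
  have "\<sigma> a = i \<longleftrightarrow> a = inv \<sigma> i" for a i
    using permutes_inv_eq[OF \<sigma>] by metis
  then show ?thesis by (simp add: permute_mat_def mE_def fun_eq_iff)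
qed

lemma sum_permute_index: "(\<Sum>m<N. g (\<sigma> m)) = (\<Sum>m<N. g m)"
  using sum.permute[OF \<sigma>, of g] by (simp add: comp_def)

lemma mmul_permute_mat:
  "mmul N (permute_mat \<sigma> A) (permute_mat \<sigma> B) = permute_mat \<sigma> (mmul N A B :: 'k::field mat)"
  by (simp add: mmul_def permute_mat_def sum_permute_index[where g = "\<lambda>m. A (\<sigma> _) m * B m (\<sigma> _)"])

lemma mbracket_permute_mat:
  "mbracket N (permute_mat \<sigma> A) (permute_mat \<sigma> B) = permute_mat \<sigma> (mbracket N A B :: 'k::field mat)"
  by (simp add: mbracket_def mmul_permute_mat) (simp add: permute_mat_def)

lemma mprod_permute_mat:
  "mprod N (map (permute_mat \<sigma>) Ms) = permute_mat \<sigma> (mprod N Ms :: 'k::field mat)"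
  by (induction Ms) (simp_all add: permute_mat_mid mmul_permute_mat)

lemma trform_permute_mat:
  "trform N (permute_mat \<sigma> A) (permute_mat \<sigma> B) = (trform N A B :: 'k::field)"
  unfolding trform_def permute_mat_def
  by (simp add: sum_permute_index[where g = "\<lambda>j. A (\<sigma> _) j * B j (\<sigma> _)"]
      sum_permute_index[where g = "\<lambda>i. \<Sum>j<N. A i j * B j i"])

end

definition relabel :: "(nat \<Rightarrow> nat) \<Rightarrow> jdiag \<Rightarrow> state \<Rightarrow> state" where
  "relabel \<sigma> D \<kappa> = restrict (\<lambda>e. map_option (map_prod \<sigma> \<sigma>) (\<kappa> e)) (ends D)"

lemma relabel_in_states:
  assumes "\<sigma> permutes {..<N}" "wf_jdiag D" "\<kappa> \<in> states N D"
  shows "relabel \<sigma> D \<kappa> \<in> states N D"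
proof -
  have "map_option (map_prod \<sigma> \<sigma>) x \<in> omega_idx N" if "x \<in> omega_idx N" for x
    using that by (auto simp: omega_idx_def permutes_lessThan_iff[OF assms(1)])
  then show ?thesis
    using assms(2,3) by (auto simp: states_def relabel_def wf_jdiag_def)
qed

lemma relabel_relabel: "relabel \<tau> D (relabel \<sigma> D \<kappa>) = relabel (\<tau> \<circ> \<sigma>) D \<kappa>"
  unfolding relabel_def by (intro restrict_ext) (simp add: option.map_comp map_prod.comp)

lemma relabel_id: "\<kappa> \<in> states N D \<Longrightarrow> relabel id D \<kappa> = \<kappa>"
  by (simp add: relabel_def states_def map_prod.id option.map_id PiE_iff extensional_restrict)

lemma bij_betw_relabel:
  assumes "\<sigma> permutes {..<N}" "wf_jdiag D"
  shows "bij_betw (relabel \<sigma> D) (states N D) (states N D)"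
proof (rule bij_betw_byWitness[where f' = "relabel (inv \<sigma>) D"])
  have inv: "inv \<sigma> \<circ> \<sigma> = id" "\<sigma> \<circ> inv \<sigma> = id"
    using permutes_inv_o[OF assms(1)] by simp_all
  show "\<forall>\<kappa>\<in>states N D. relabel (inv \<sigma>) D (relabel \<sigma> D \<kappa>) = \<kappa>"
    "\<forall>\<kappa>\<in>states N D. relabel \<sigma> D (relabel (inv \<sigma>) D \<kappa>) = \<kappa>"
    by (simp_all add: relabel_relabel inv relabel_id)
  show "relabel \<sigma> D ` states N D \<subseteq> states N D" "relabel (inv \<sigma>) D ` states N D \<subseteq> states N D"
    using assms relabel_in_states permutes_inv by blast+
qed

lemma endval_relabel:
  assumes "\<sigma> permutes {..<N}" "\<kappa> \<in> states N D" "e \<in> ends D"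
  shows "endval N D (relabel (inv \<sigma>) D \<kappa>) e = permute_mat \<sigma> (endval N D \<kappa> e :: 'k::field mat)"
proof -
  have "\<kappa> e \<in> omega_idx N" using assms(2,3) by (auto simp: states_def)
  then show ?thesis
    using assms(3) by (auto simp: omega_idx_def endval_def relabel_def
        permute_mat_mid[OF assms(1)] permute_mat_mE[OF assms(1)])
qed

lemma state_weight_relabel:
  assumes "\<sigma> permutes {..<N}" "\<kappa> \<in> states N D"
  shows "state_weight N D (relabel (inv \<sigma>) D \<kappa>) = (state_weight N D \<kappa> :: 'k::field)"
proof -
  have "omega_coef N (relabel (inv \<sigma>) D \<kappa> e) = (omega_coef N (\<kappa> e) :: 'k)" if "e \<in> ends D" for e
    using that by (cases "\<kappa> e") (auto simp: relabel_def)
  moreover have "TV v t \<in> ends D" if "v < nverts D" "t < 3" for v t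
    using that by (simp add: ends_def)
  ultimately show ?thesis
    unfolding state_weight_def
    by (simp add: endval_relabel[OF assms] mbracket_permute_mat[OF assms(1)]
        trform_permute_mat[OF assms(1)])
qed

lemma strand_val_relabel:
  assumes "\<sigma> permutes {..<N}" "\<kappa> \<in> states N D" "s < 2"
  shows "strand_val N D (relabel (inv \<sigma>) D \<kappa>) s =
    permute_mat \<sigma> (strand_val N D \<kappa> s :: 'k::field mat)"
proof -
  have "SP s p \<in> ends D" if "p < npts D s" for p
    using that assms(3) by (simp add: ends_def)
  then have "map (\<lambda>p. endval N D (relabel (inv \<sigma>) D \<kappa>) (SP s p)) [0..<npts D s]
      = map (permute_mat \<sigma>) (map (\<lambda>p. endval N D \<kappa> (SP s p) :: 'k mat) [0..<npts D s])"
    by (simp add: endval_relabel[OF assms(1,2)])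
  then show ?thesis
    unfolding strand_val_def by (simp only: mprod_permute_mat[OF assms(1)])
qed

lemma Wst_permute:
  assumes "\<sigma> permutes {..<N}" "wf_jdiag D"
  shows "Wst N D (\<sigma> i) (\<sigma> j) (\<sigma> k) (\<sigma> l) = (Wst N D i j k l :: 'k::field)"
proof -
  let ?term = "\<lambda>\<kappa>. state_weight N D \<kappa> * strand_val N D \<kappa> 0 i j * strand_val N D \<kappa> 1 k l :: 'k"
  have "Wst N D i j k l = (\<Sum>\<kappa>\<in>states N D. ?term (relabel (inv \<sigma>) D \<kappa>))"
    unfolding Wst_def
    using sum.reindex_bij_betw[OF bij_betw_relabel[OF permutes_inv[OF assms(1)] assms(2)], of ?term]
    by simp
  also have "\<dots> = Wst N D (\<sigma> i) (\<sigma> j) (\<sigma> k) (\<sigma> l)"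
    unfolding Wst_def
    by (intro sum.cong refl)
      (simp add: state_weight_relabel[OF assms(1)] strand_val_relabel[OF assms(1)] permute_mat_def)
  finally show ?thesis ..
qed

section \<open>Invariant tensors of weight zero commute\<close>

definition zero_weight :: "nat \<Rightarrow> 'k::field tens2 \<Rightarrow> bool" where
  "zero_weight N T \<longleftrightarrow> (\<forall>i j k l. T i j k l \<noteq> 0 \<longrightarrow>
     i < N \<and> j < N \<and> k < N \<and> l < N \<and> (i = j \<and> k = l \<or> i = l \<and> k = j))"

definition perm_invariant :: "nat \<Rightarrow> 'k::field tens2 \<Rightarrow> bool" where
  "perm_invariant N T \<longleftrightarrow>
     (\<forall>\<sigma>. \<sigma> permutes {..<N} \<longrightarrow> (\<forall>i j k l. T (\<sigma> i) (\<sigma> j) (\<sigma> k) (\<sigma> l) = T i j k l))"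

lemma zero_weightD:
  "zero_weight N T \<Longrightarrow> T i j k l \<noteq> 0 \<Longrightarrow>
    i < N \<and> j < N \<and> k < N \<and> l < N \<and> (i = j \<and> k = l \<or> i = l \<and> k = j)"
  by (simp add: zero_weight_def)

lemma perm_invariant_swap:
  assumes "perm_invariant N T" "i < N" "k < N"
  shows "T k i i k = T i k k i" "T k k i i = T i i k k"
proof -
  have "transpose i k permutes {..<N}" using assms(2,3) by (simp add: permutes_swap_id)
  then have "T (transpose i k a) (transpose i k b) (transpose i k c) (transpose i k d) = T a b c d"
    for a b c d using assms(1) by (simp add: perm_invariant_def)
  from this[of i k k i] this[of i i k k] show "T k i i k = T i k k i" "T k k i i = T i i k k"
    by simp_all
qed

lemma tmul_zero_weight:
  assumes "zero_weight N S"
  shows "tmul N S T i j k l = (if i < N \<and> k < N then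
     if i = k then S i i i i * T i j i l else S i i k k * T i j k l + S i k k i * T k j i l else 0)"
proof -
  have supp: "i < N \<and> k < N \<and> (m = i \<and> n = k \<or> m = k \<and> n = i)" if "S i m k n \<noteq> 0" for m n
    using zero_weightD[OF assms that] by auto
  consider "\<not> (i < N \<and> k < N)" | "i < N" "i = k" | "i < N" "k < N" "i \<noteq> k"
    by blast
  then show ?thesis
  proof cases
    case 1
    then have "S i m k n = 0" for m n using supp by blast
    with 1 show ?thesis by (auto simp: tmul_def)
  next
    case 2
    then have "tmul N S T i j k l =
        (\<Sum>m<N. \<Sum>n<N. if m = i then if n = i then S i i i i * T i j i l else 0 else 0)"
      unfolding tmul_def using supp by (intro sum.cong refl) auto
    then show ?thesis using 2 by (simp add: sum.If_cases)
  next
    case 3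
    then have "tmul N S T i j k l = (\<Sum>m<N. \<Sum>n<N.
        (if m = i then if n = k then S i i k k * T i j k l else 0 else 0) +
        (if m = k then if n = i then S i k k i * T k j i l else 0 else 0))"
      unfolding tmul_def using supp by (intro sum.cong refl) auto
    then show ?thesis using 3 by (simp add: sum.If_cases sum.distrib)
  qed
qed

lemma tmul_commute_if_invariant:
  assumes "zero_weight N S" "perm_invariant N S" "zero_weight N T" "perm_invariant N T"
  shows "tmul N S T = tmul N T S"
proof (intro ext)
  fix i j k l
  show "tmul N S T i j k l = tmul N T S i j k l"
  proof (cases "i < N \<and> k < N \<and> i \<noteq> k")
    case True
    have "(j, l) = (i, k) \<or> (j, l) = (k, i) \<or>
        (S i j k l = 0 \<and> T i j k l = 0 \<and> S k j i l = 0 \<and> T k j i l = 0)"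
      using zero_weightD[OF assms(1), of i j k l] zero_weightD[OF assms(3), of i j k l]
        zero_weightD[OF assms(1), of k j i l] zero_weightD[OF assms(3), of k j i l] True
      by auto
    then show ?thesis
      using True perm_invariant_swap[OF assms(2)] perm_invariant_swap[OF assms(4)]
      by (auto simp: tmul_zero_weight[OF assms(1)] tmul_zero_weight[OF assms(3)] algebra_simps)
  next
    case False
    have "j = i \<and> l = i \<or> S i j i l = 0 \<and> T i j i l = 0"
      using zero_weightD[OF assms(1), of i j i l] zero_weightD[OF assms(3), of i j i l] by blast
    then have "S i j i l * T i i i i = S i i i i * T i j i l" by auto
    with False show ?thesis
      by (auto simp: tmul_zero_weight[OF assms(1)] tmul_zero_weight[OF assms(3)] mult.commute)
  qed
qed

section \<open>Stacking diagrams\<close>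

definition shift_end :: "jdiag \<Rightarrow> jend \<Rightarrow> jend" where
  "shift_end D e = (case e of TV v t \<Rightarrow> TV (v + nverts D) t | SP s p \<Rightarrow> SP s (p + npts D s))"

definition unshift_end :: "jdiag \<Rightarrow> jend \<Rightarrow> jend" where
  "unshift_end D e = (case e of TV v t \<Rightarrow> TV (v - nverts D) t | SP s p \<Rightarrow> SP s (p - npts D s))"

definition stack :: "jdiag \<Rightarrow> jdiag \<Rightarrow> jdiag" where
  "stack D1 D2 = \<lparr>nverts = nverts D1 + nverts D2, npts = (\<lambda>s. npts D1 s + npts D2 s),
     partner = (\<lambda>e. if e \<in> ends D1 then partner D1 e
                    else shift_end D1 (partner D2 (unshift_end D1 e)))\<rparr>"

lemma nverts_stack [simp]: "nverts (stack D1 D2) = nverts D1 + nverts D2"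
  by (simp add: stack_def)

lemma npts_stack [simp]: "npts (stack D1 D2) s = npts D1 s + npts D2 s"
  by (simp add: stack_def)

lemma unshift_end_shift_end [simp]: "unshift_end D (shift_end D e) = e"
  by (cases e) (simp_all add: shift_end_def unshift_end_def)

lemma inj_shift_end: "inj (shift_end D)"
  by (metis injI unshift_end_shift_end)

lemma shift_end_notin_ends: "shift_end D e \<notin> ends D"
  by (cases e) (auto simp: shift_end_def mem_ends_iff)

lemma end_lt_shift_end [simp]: "end_lt (shift_end D e) (shift_end D e') = end_lt e e'"
  by (cases e; cases e') (auto simp: shift_end_def)

lemma ends_stack: "ends (stack D1 D2) = ends D1 \<union> shift_end D1 ` ends D2"
proof (intro equalityI subsetI)
  fix e assume e: "e \<in> ends (stack D1 D2)"
  show "e \<in> ends D1 \<union> shift_end D1 ` ends D2"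
  proof (cases "e \<in> ends D1")
    case False
    with e have "unshift_end D1 e \<in> ends D2" "e = shift_end D1 (unshift_end D1 e)"
      by (cases e; auto simp: mem_ends_iff stack_def shift_end_def unshift_end_def)+
    then show ?thesis by blast
  qed simp
qed (auto simp: mem_ends_iff stack_def shift_end_def split: jend.splits)

lemma partner_stack_left: "e \<in> ends D1 \<Longrightarrow> partner (stack D1 D2) e = partner D1 e"
  by (simp add: stack_def)

lemma partner_stack_right: "partner (stack D1 D2) (shift_end D1 e) = shift_end D1 (partner D2 e)"
  by (simp add: stack_def shift_end_notin_ends)

lemma wf_stack:
  assumes "wf_jdiag D1" "wf_jdiag D2"
  shows "wf_jdiag (stack D1 D2)"
  using assms
  by (auto simp: wf_jdiag_def ends_stack partner_stack_left partner_stack_right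
      inj_eq[OF inj_shift_end])

definition merge_states :: "jdiag \<Rightarrow> jdiag \<Rightarrow> state \<Rightarrow> state \<Rightarrow> state" where
  "merge_states D1 D2 \<kappa>1 \<kappa>2 = restrict
     (\<lambda>e. if e \<in> ends D1 then \<kappa>1 e else \<kappa>2 (unshift_end D1 e)) (ends (stack D1 D2))"

definition split_state :: "jdiag \<Rightarrow> jdiag \<Rightarrow> state \<Rightarrow> state \<times> state" where
  "split_state D1 D2 \<kappa> = (restrict \<kappa> (ends D1), restrict (\<kappa> \<circ> shift_end D1) (ends D2))"

lemma merge_states_left: "e \<in> ends D1 \<Longrightarrow> merge_states D1 D2 \<kappa>1 \<kappa>2 e = \<kappa>1 e"
  by (simp add: merge_states_def ends_stack)

lemma merge_states_right: "e \<in> ends D2 \<Longrightarrow> merge_states D1 D2 \<kappa>1 \<kappa>2 (shift_end D1 e) = \<kappa>2 e"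
  by (simp add: merge_states_def ends_stack shift_end_notin_ends)

lemma merge_in_states:
  assumes "wf_jdiag D1" "wf_jdiag D2" "\<kappa>1 \<in> states N D1" "\<kappa>2 \<in> states N D2"
  shows "merge_states D1 D2 \<kappa>1 \<kappa>2 \<in> states N (stack D1 D2)"
  unfolding states_def
proof (intro CollectI conjI ballI)
  let ?\<kappa> = "merge_states D1 D2 \<kappa>1 \<kappa>2"
  show "?\<kappa> \<in> ends (stack D1 D2) \<rightarrow>\<^sub>E omega_idx N"
    using assms(3,4) by (auto simp: merge_states_def ends_stack states_def shift_end_notin_ends)
  fix e assume "e \<in> ends (stack D1 D2)"
  then consider "e \<in> ends D1" | e' where "e = shift_end D1 e'" "e' \<in> ends D2"
    by (auto simp: ends_stack)
  then show "?\<kappa> (partner (stack D1 D2) e) = ?\<kappa> e"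
  proof cases
    case 1
    then show ?thesis using assms(1,3)
      by (simp add: wf_jdiag_def states_def partner_stack_left merge_states_left)
  next
    case 2
    then show ?thesis using assms(2,4)
      by (simp add: wf_jdiag_def states_def partner_stack_right merge_states_right)
  qed
qed

lemma split_in_states:
  assumes "wf_jdiag D1" "wf_jdiag D2" "\<kappa> \<in> states N (stack D1 D2)"
  shows "split_state D1 D2 \<kappa> \<in> states N D1 \<times> states N D2"
proof -
  have "\<kappa> (partner D1 e) = \<kappa> e" if "e \<in> ends D1" for e
    using states_partner[OF assms(3), of e] that by (simp add: ends_stack partner_stack_left)
  moreover have "\<kappa> (shift_end D1 (partner D2 e)) = \<kappa> (shift_end D1 e)" if "e \<in> ends D2" for e
    using states_partner[OF assms(3), of "shift_end D1 e"] that
    by (simp add: ends_stack partner_stack_right)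
  ultimately show ?thesis
    using assms unfolding states_def wf_jdiag_def split_state_def by (auto simp: ends_stack)
qed

lemma bij_betw_merge_states:
  assumes "wf_jdiag D1" "wf_jdiag D2"
  shows "bij_betw (\<lambda>(\<kappa>1, \<kappa>2). merge_states D1 D2 \<kappa>1 \<kappa>2) (states N D1 \<times> states N D2)
    (states N (stack D1 D2))"
proof (rule bij_betw_byWitness[where f' = "split_state D1 D2"])
  show "\<forall>\<kappa>\<in>states N D1 \<times> states N D2.
      split_state D1 D2 (case \<kappa> of (\<kappa>1, \<kappa>2) \<Rightarrow> merge_states D1 D2 \<kappa>1 \<kappa>2) = \<kappa>"
  proof safe
    fix \<kappa>1 \<kappa>2 assume "\<kappa>1 \<in> states N D1" "\<kappa>2 \<in> states N D2"
    then have "\<kappa>1 \<in> extensional (ends D1)" "\<kappa>2 \<in> extensional (ends D2)"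
      by (auto simp: states_def PiE_iff)
    then show "split_state D1 D2 (merge_states D1 D2 \<kappa>1 \<kappa>2) = (\<kappa>1, \<kappa>2)"
      by (auto simp: split_state_def merge_states_left merge_states_right extensional_def
          fun_eq_iff)
  qed
  show "\<forall>\<kappa>\<in>states N (stack D1 D2).
      (case split_state D1 D2 \<kappa> of (\<kappa>1, \<kappa>2) \<Rightarrow> merge_states D1 D2 \<kappa>1 \<kappa>2) = \<kappa>"
    by (auto simp: split_state_def states_def merge_states_def ends_stack shift_end_notin_ends
        PiE_iff extensional_def fun_eq_iff)
  show "(\<lambda>(\<kappa>1, \<kappa>2). merge_states D1 D2 \<kappa>1 \<kappa>2) ` (states N D1 \<times> states N D2)
      \<subseteq> states N (stack D1 D2)"
    using merge_in_states[OF assms] by auto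
  show "split_state D1 D2 ` states N (stack D1 D2) \<subseteq> states N D1 \<times> states N D2"
    using split_in_states[OF assms] by blast
qed

lemma endval_merge_left:
  "e \<in> ends D1 \<Longrightarrow> endval N (stack D1 D2) (merge_states D1 D2 \<kappa>1 \<kappa>2) e = endval N D1 \<kappa>1 e"
  by (simp add: endval_def partner_stack_left merge_states_left)

lemma endval_merge_right:
  "e \<in> ends D2 \<Longrightarrow>
    endval N (stack D1 D2) (merge_states D1 D2 \<kappa>1 \<kappa>2) (shift_end D1 e) = endval N D2 \<kappa>2 e"
  by (simp add: endval_def partner_stack_right merge_states_right)

lemma prod_lessThan_add: "(\<Prod>v<a + b. g v) = (\<Prod>v<a. g v) * (\<Prod>v<b. g (v + a))"
  for a b :: nat
  by (induction b) (simp_all add: mult.assoc add.commute)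

lemma state_weight_merge:
  "state_weight N (stack D1 D2) (merge_states D1 D2 \<kappa>1 \<kappa>2) =
    state_weight N D1 \<kappa>1 * (state_weight N D2 \<kappa>2 :: 'k::field)"
proof -
  let ?\<kappa> = "merge_states D1 D2 \<kappa>1 \<kappa>2"
  let ?E = "\<lambda>D. {e \<in> ends D. end_lt e (partner D e)}"
  let ?V = "\<lambda>D \<kappa> v. - trform N (mbracket N (endval N D \<kappa> (TV v 0)) (endval N D \<kappa> (TV v 1)))
      (endval N D \<kappa> (TV v 2)) :: 'k"
  let ?c = "\<lambda>e. omega_coef N (?\<kappa> e) :: 'k"
  have E: "?E (stack D1 D2) = ?E D1 \<union> shift_end D1 ` ?E D2"
    by (auto simp: ends_stack partner_stack_left partner_stack_right)
  have "prod ?c (?E (stack D1 D2)) = prod ?c (?E D1) * prod ?c (shift_end D1 ` ?E D2)"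
    unfolding E by (rule prod.union_disjoint) (auto simp: finite_ends shift_end_notin_ends)
  also have "\<dots> = prod ?c (?E D1) * (\<Prod>e\<in>?E D2. ?c (shift_end D1 e))"
    by (simp add: prod.reindex inj_on_subset[OF inj_shift_end])
  also have "\<dots> = (\<Prod>e\<in>?E D1. omega_coef N (\<kappa>1 e)) * (\<Prod>e\<in>?E D2. omega_coef N (\<kappa>2 e))"
    by (simp add: merge_states_left merge_states_right)
  finally have edges: "(\<Prod>e\<in>?E (stack D1 D2). omega_coef N (?\<kappa> e)) =
      (\<Prod>e\<in>?E D1. omega_coef N (\<kappa>1 e)) * (\<Prod>e\<in>?E D2. omega_coef N (\<kappa>2 e) :: 'k)" .
  have "TV (v + nverts D1) t = shift_end D1 (TV v t)" for v t
    by (simp add: shift_end_def)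
  then have vertices: "(\<Prod>v<nverts (stack D1 D2). ?V (stack D1 D2) ?\<kappa> v) =
      (\<Prod>v<nverts D1. ?V D1 \<kappa>1 v) * (\<Prod>v<nverts D2. ?V D2 \<kappa>2 v)"
    by (simp add: prod_lessThan_add mem_ends_iff endval_merge_left endval_merge_right)
  show ?thesis
    unfolding state_weight_def edges vertices by (simp add: ac_simps)
qed

lemma strand_val_merge:
  assumes "\<kappa>2 \<in> states N D2" "s < 2"
  shows "strand_val N (stack D1 D2) (merge_states D1 D2 \<kappa>1 \<kappa>2) s =
    mmul N (strand_val N D1 \<kappa>1 s) (strand_val N D2 \<kappa>2 s :: 'k::field mat)"
proof -
  let ?ev = "\<lambda>p. endval N (stack D1 D2) (merge_states D1 D2 \<kappa>1 \<kappa>2) (SP s p) :: 'k mat"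
  let ?n1 = "npts D1 s" and ?n2 = "npts D2 s"
  have "[0..<?n1 + ?n2] = [0..<?n1] @ map (\<lambda>p. p + ?n1) [0..<?n2]"
    using upt_add_eq_append[of 0 ?n1 ?n2] map_add_upt[of ?n1 ?n2] by (simp add: add.commute)
  moreover have "SP s (p + ?n1) = shift_end D1 (SP s p)" for p
    by (simp add: shift_end_def)
  ultimately have "map ?ev [0..<?n1 + ?n2] =
      map (\<lambda>p. endval N D1 \<kappa>1 (SP s p)) [0..<?n1] @ map (\<lambda>p. endval N D2 \<kappa>2 (SP s p)) [0..<?n2]"
    using assms(2) by (simp add: mem_ends_iff endval_merge_left endval_merge_right)
  moreover have "strand_val N D2 \<kappa>2 s a b \<noteq> (0::'k) \<Longrightarrow> a < N" for a b
    using has_charge_strand_val[OF assms, of 0, where 'k = 'k] by (simp add: has_charge_def)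
  ultimately show ?thesis
    unfolding strand_val_def npts_stack by (simp add: mprod_append)
qed

lemma Wst_eq_sum_mat_tensor:
  "Wst N D = (\<lambda>i j k l. \<Sum>\<kappa>\<in>states N D.
     state_weight N D \<kappa> * mat_tensor (strand_val N D \<kappa> 0) (strand_val N D \<kappa> 1) i j k l)"
  by (simp add: Wst_def mat_tensor_def mult.assoc)

lemma Wst_stack:
  assumes "wf_jdiag D1" "wf_jdiag D2"
  shows "Wst N (stack D1 D2) = tmul N (Wst N D1) (Wst N D2 :: 'k::field tens2)"
proof (intro ext)
  fix i j k l
  let ?S1 = "states N D1" and ?S2 = "states N D2"
  let ?w = "\<lambda>D \<kappa>. state_weight N D \<kappa> :: 'k"
  let ?t = "\<lambda>D \<kappa>. mat_tensor (strand_val N D \<kappa> 0) (strand_val N D \<kappa> 1) :: 'k tens2"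
  have "Wst N (stack D1 D2) i j k l =
      (\<Sum>(\<kappa>1, \<kappa>2)\<in>?S1 \<times> ?S2. ?w (stack D1 D2) (merge_states D1 D2 \<kappa>1 \<kappa>2) *
        ?t (stack D1 D2) (merge_states D1 D2 \<kappa>1 \<kappa>2) i j k l)"
    unfolding Wst_eq_sum_mat_tensor
    by (subst sum.reindex_bij_betw[OF bij_betw_merge_states[OF assms], symmetric])
      (simp add: case_prod_beta')
  also have "\<dots> = (\<Sum>\<kappa>1\<in>?S1. \<Sum>\<kappa>2\<in>?S2. ?w D1 \<kappa>1 * ?w D2 \<kappa>2 * tmul N (?t D1 \<kappa>1) (?t D2 \<kappa>2) i j k l)"
    unfolding sum.cartesian_product[symmetric]
    by (intro sum.cong refl)
      (simp add: state_weight_merge strand_val_merge tmul_mat_tensor)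
  also have "\<dots> = tmul N (Wst N D1) (Wst N D2) i j k l"
    unfolding Wst_eq_sum_mat_tensor tmul_sum_scaled ..
  finally show "Wst N (stack D1 D2) i j k l = (tmul N (Wst N D1) (Wst N D2) i j k l :: 'k)" .
qed

definition empty_jdiag :: jdiag where
  "empty_jdiag = \<lparr>nverts = 0, npts = (\<lambda>_. 0), partner = id\<rparr>"

lemma ends_empty_jdiag: "ends empty_jdiag = {}"
  by (simp add: ends_def empty_jdiag_def)

lemma wf_empty_jdiag: "wf_jdiag empty_jdiag"
  by (simp add: wf_jdiag_def ends_empty_jdiag)

lemma Wst_empty_jdiag: "Wst N empty_jdiag = tid N"
proof -
  have "states N empty_jdiag = {\<lambda>_. undefined}"
    by (simp add: states_def ends_empty_jdiag)
  moreover have "nverts empty_jdiag = 0" "npts empty_jdiag s = 0" for s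
    by (simp_all add: empty_jdiag_def)
  ultimately show ?thesis
    by (simp add: Wst_def tid_def state_weight_def strand_val_def ends_empty_jdiag)
qed

lemma Wst_image_sum:
  assumes "finite I" "\<And>x. x \<in> I \<Longrightarrow> wf_jdiag (f x)"
  shows "(\<lambda>i j k l. \<Sum>x\<in>I. a x * Wst N (f x) i j k l) \<in> (Wst_image N :: 'k::field tens2 set)"
proof -
  define c where "c D = (\<Sum>x\<in>{x\<in>I. f x = D}. a x)" for D
  have "(\<lambda>i j k l. \<Sum>x\<in>I. a x * Wst N (f x) i j k l) =
      (\<lambda>i j k l. \<Sum>D\<in>f ` I. c D * Wst N D i j k l :: 'k)"
  proof (intro ext)
    fix i j k l
    have "(\<Sum>x\<in>I. a x * Wst N (f x) i j k l) =
        (\<Sum>D\<in>f ` I. \<Sum>x\<in>{x\<in>I. f x = D}. a x * Wst N (f x) i j k l :: 'k)"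
      by (rule sum.image_gen[OF assms(1)])
    also have "\<dots> = (\<Sum>D\<in>f ` I. c D * Wst N D i j k l)"
      unfolding c_def sum_distrib_right by (intro sum.cong refl) auto
    finally show "(\<Sum>x\<in>I. a x * Wst N (f x) i j k l) = (\<Sum>D\<in>f ` I. c D * Wst N D i j k l)" .
  qed
  then show ?thesis
    using assms unfolding Wst_image_def by blast
qed

lemma Wst_imageE:
  fixes T :: "'k::field tens2"
  assumes "T \<in> Wst_image N"
  obtains F c where "finite F" "\<And>D. D \<in> F \<Longrightarrow> wf_jdiag D"
    "T = (\<lambda>i j k l. \<Sum>D\<in>F. c D * Wst N D i j k l)"
  using assms unfolding Wst_image_def by blast

lemma zero_weight_Wst_image:
  fixes T :: "'k::field tens2"
  assumes "T \<in> Wst_image N"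
  shows "zero_weight N T"
proof -
  obtain F c where F: "finite F" "\<And>D. D \<in> F \<Longrightarrow> wf_jdiag D"
    and T: "T = (\<lambda>i j k l. \<Sum>D\<in>F. c D * Wst N D i j k l)"
    using Wst_imageE[OF assms] by blast
  show ?thesis
    unfolding zero_weight_def T
  proof (intro allI impI)
    fix i j k l assume "(\<Sum>D\<in>F. c D * Wst N D i j k l) \<noteq> 0"
    then obtain D where D: "D \<in> F" "c D * Wst N D i j k l \<noteq> 0"
      by (rule sum.not_neutral_contains_not_neutral)
    then have "Wst N D i j k l \<noteq> (0::'k)" by simp
    then show "i < N \<and> j < N \<and> k < N \<and> l < N \<and> (i = j \<and> k = l \<or> i = l \<and> k = j)"
      by (rule Wst_support[OF F(2)[OF D(1)]])
  qed
qed

lemma perm_invariant_Wst_image: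
  fixes T :: "'k::field tens2"
  assumes "T \<in> Wst_image N"
  shows "perm_invariant N T"
proof -
  obtain F c where F: "finite F" "\<And>D. D \<in> F \<Longrightarrow> wf_jdiag D"
    and T: "T = (\<lambda>i j k l. \<Sum>D\<in>F. c D * Wst N D i j k l)"
    using Wst_imageE[OF assms] by blast
  then show ?thesis
    by (simp add: perm_invariant_def Wst_permute)
qed

lemma tid_in_Wst_image: "tid N \<in> (Wst_image N :: 'k::field tens2 set)"
  using Wst_image_sum[of "{()}" "\<lambda>_. empty_jdiag" "\<lambda>_. 1" N]
  by (simp add: wf_empty_jdiag Wst_empty_jdiag)

lemma Wst_image_add:
  fixes S T :: "'k::field tens2"
  assumes "S \<in> Wst_image N" "T \<in> Wst_image N"
  shows "(\<lambda>i j k l. S i j k l + T i j k l) \<in> Wst_image N"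
proof -
  obtain F c where F: "finite F" "\<And>D. D \<in> F \<Longrightarrow> wf_jdiag D"
    and S: "S = (\<lambda>i j k l. \<Sum>D\<in>F. c D * Wst N D i j k l)"
    using Wst_imageE[OF assms(1)] by blast
  obtain G d where G: "finite G" "\<And>D. D \<in> G \<Longrightarrow> wf_jdiag D"
    and T: "T = (\<lambda>i j k l. \<Sum>D\<in>G. d D * Wst N D i j k l)"
    using Wst_imageE[OF assms(2)] by blast
  have "(\<lambda>i j k l. \<Sum>x\<in>F <+> G. case_sum c d x * Wst N (case_sum id id x) i j k l) \<in> Wst_image N"
    using F G by (intro Wst_image_sum) auto
  then show ?thesis
    using F(1) G(1) by (simp add: S T sum.Plus)
qed

lemma Wst_image_scale:
  fixes T :: "'k::field tens2"
  assumes "T \<in> Wst_image N"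
  shows "(\<lambda>i j k l. a * T i j k l) \<in> Wst_image N"
proof -
  obtain F c where F: "finite F" "\<And>D. D \<in> F \<Longrightarrow> wf_jdiag D"
    and T: "T = (\<lambda>i j k l. \<Sum>D\<in>F. c D * Wst N D i j k l)"
    using Wst_imageE[OF assms] by blast
  have "(\<lambda>i j k l. \<Sum>D\<in>F. (a * c D) * Wst N D i j k l) \<in> Wst_image N"
    using F Wst_image_sum[of F id] by simp
  then show ?thesis
    by (simp add: T sum_distrib_left mult.assoc)
qed

lemma Wst_image_tmul:
  fixes S T :: "'k::field tens2"
  assumes "S \<in> Wst_image N" "T \<in> Wst_image N"
  shows "tmul N S T \<in> Wst_image N"
proof -
  obtain F c where F: "finite F" "\<And>D. D \<in> F \<Longrightarrow> wf_jdiag D"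
    and S: "S = (\<lambda>i j k l. \<Sum>D\<in>F. c D * Wst N D i j k l)"
    using Wst_imageE[OF assms(1)] by blast
  obtain G d where G: "finite G" "\<And>D. D \<in> G \<Longrightarrow> wf_jdiag D"
    and T: "T = (\<lambda>i j k l. \<Sum>D\<in>G. d D * Wst N D i j k l)"
    using Wst_imageE[OF assms(2)] by blast
  have "tmul N S T = (\<lambda>i j k l. \<Sum>D\<in>F. \<Sum>E\<in>G. c D * d E * tmul N (Wst N D) (Wst N E) i j k l)"
    by (simp add: S T tmul_sum_scaled)
  also have "\<dots> = (\<lambda>i j k l. \<Sum>(D, E)\<in>F \<times> G. c D * d E * Wst N (stack D E) i j k l)"
    unfolding sum.cartesian_product[symmetric]
    by (intro ext sum.cong refl) (simp add: Wst_stack F(2) G(2))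
  also have "\<dots> = (\<lambda>i j k l. \<Sum>x\<in>F \<times> G.
      (case x of (D, E) \<Rightarrow> c D * d E) * Wst N (case x of (D, E) \<Rightarrow> stack D E) i j k l)"
    by (simp add: case_prod_beta')
  also have "\<dots> \<in> Wst_image N"
    using F G wf_stack by (intro Wst_image_sum) auto
  finally show ?thesis .
qed

theorem corollary5p5:
  fixes N :: nat
  assumes "N \<ge> 2"
  shows "comm_subalgebra N (Wst_image N :: ('k::field_char_0) tens2 set)"
  unfolding comm_subalgebra_def
  by (intro conjI ballI allI tid_in_Wst_image Wst_image_add Wst_image_scale Wst_image_tmul
      tmul_commute_if_invariant zero_weight_Wst_image perm_invariant_Wst_image)

end
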